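(* Let $R$ be an integral domain and $I$ an ideal of $R[X]$ such that $I\cap R$ is a maximal ideal of $R$. Then $I$ is power stable.
   Context: An ideal $I$ of the polynomial ring $R[X]$ over an integral domain $R$ is called power stable if $I^t\cap R = (I\cap R)^t$ for all integers $t\geq 1$. *)

theory Defs
  imports "HOL-Computational_Algebra.Polynomial"
begin

definition is_ideal :: "'a::comm_ring_1 set \<Rightarrow> bool" where
  "is_ideal I \<longleftrightarrow> 0 \<in> I \<and> (\<forall>x\<in>I. \<forall>y\<in>I. x + y \<in> I) \<and> (\<forall>r x. x \<in> I \<longrightarrow> r * x \<in> I)"

definition ideal_gen :: "'a::comm_ring_1 set \<Rightarrow> 'a set" where
  "ideal_gen S = \<Inter>{J. is_ideal J \<and> S \<subseteq> J}"

definition ideal_mult :: "'a::comm_ring_1 set \<Rightarrow> 'a set \<Rightarrow> 'a set" where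
  "ideal_mult I J = ideal_gen {i * j | i j. i \<in> I \<and> j \<in> J}"

primrec ideal_power :: "'a::comm_ring_1 set \<Rightarrow> nat \<Rightarrow> 'a set" where
  "ideal_power I 0 = UNIV"
| "ideal_power I (Suc n) = ideal_mult I (ideal_power I n)"

definition maximal_ideal :: "'a::comm_ring_1 set \<Rightarrow> bool" where
  "maximal_ideal M \<longleftrightarrow> is_ideal M \<and> M \<noteq> UNIV \<and>
     (\<forall>J. is_ideal J \<and> M \<subseteq> J \<longrightarrow> J = M \<or> J = UNIV)"

text \<open>The contraction \<open>I \<inter> R\<close> of an ideal of \<open>R[X]\<close>, with \<open>R\<close> embedded as constants.\<close>
definition contract :: "'a::comm_ring_1 poly set \<Rightarrow> 'a set" where
  "contract I = {a. [:a:] \<in> I}"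

definition power_stable :: "'a::idom poly set \<Rightarrow> bool" where
  "power_stable I \<longleftrightarrow> (\<forall>t::nat. t \<ge> 1 \<longrightarrow> contract (ideal_power I t) = ideal_power (contract I) t)"

end

theory Submission
  imports Defs
begin

(* Let m = I \<inter> R be maximal.  The proof shows that modulo the extended ideal m[X] the
   ideal I is generated by a single monic polynomial f of positive degree:
       I \<subseteq> m[X] + (f).
   To find f, take p \<in> I whose highest coefficient outside m sits in the least possible
   degree d; that coefficient u is invertible modulo m, so u\<inverse>p is congruent mod m[X] to a
   monic f of degree d, which lies in I because m[X] \<subseteq> I.  Division by f then leaves
   remainders of degree < d in I, which by minimality of d lie in m[X].
   Since m[X] + (f) is an ideal and (m[X] + (f))(n[X] + (f)) \<subseteq> (mn)[X] + (f), we get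
   I^t \<subseteq> m^t[X] + (f).  Finally, a constant c = g + f s with g \<in> m^t[X] forces
   s \<in> m^t[X] (as f is monic of positive degree), hence c \<in> m^t.  Together with the
   trivial inclusion m^t \<subseteq> I^t \<inter> R this is power stability. *)

lemma ideal_zero: "is_ideal I \<Longrightarrow> 0 \<in> I"
  by (simp add: is_ideal_def)

lemma ideal_add: "is_ideal I \<Longrightarrow> x \<in> I \<Longrightarrow> y \<in> I \<Longrightarrow> x + y \<in> I"
  by (simp add: is_ideal_def)

lemma ideal_lmult: "is_ideal I \<Longrightarrow> x \<in> I \<Longrightarrow> r * x \<in> I"
  by (simp add: is_ideal_def)

lemma ideal_rmult: "is_ideal I \<Longrightarrow> x \<in> I \<Longrightarrow> x * r \<in> I"
  by (simp add: is_ideal_def mult.commute)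

lemma ideal_neg: "is_ideal I \<Longrightarrow> x \<in> I \<Longrightarrow> - x \<in> I"
  using ideal_lmult[of I x "-1"] by simp

lemma ideal_diff: "is_ideal I \<Longrightarrow> x \<in> I \<Longrightarrow> y \<in> I \<Longrightarrow> x - y \<in> I"
  using ideal_add[of I x "-y"] ideal_neg[of I y] by simp

lemma ideal_sum: "is_ideal I \<Longrightarrow> (\<And>x. x \<in> A \<Longrightarrow> f x \<in> I) \<Longrightarrow> sum f A \<in> I"
  by (induct A rule: infinite_finite_induct) (auto simp: ideal_zero ideal_add)

lemma ideal_UNIV: "is_ideal UNIV"
  by (simp add: is_ideal_def)

lemma ideal_one_imp_UNIV: "is_ideal I \<Longrightarrow> 1 \<in> I \<Longrightarrow> I = UNIV"
  using ideal_lmult[of I 1] by auto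

lemma ideal_gen_ideal: "is_ideal (ideal_gen S)"
  unfolding ideal_gen_def is_ideal_def by blast

lemma ideal_gen_sub: "S \<subseteq> ideal_gen S"
  unfolding ideal_gen_def by auto

lemma ideal_gen_least: "is_ideal J \<Longrightarrow> S \<subseteq> J \<Longrightarrow> ideal_gen S \<subseteq> J"
  unfolding ideal_gen_def by auto

lemma ideal_mult_ideal: "is_ideal (ideal_mult A B)"
  unfolding ideal_mult_def by (rule ideal_gen_ideal)

lemma ideal_mult_mem: "a \<in> A \<Longrightarrow> b \<in> B \<Longrightarrow> a * b \<in> ideal_mult A B"
  unfolding ideal_mult_def by (rule subsetD[OF ideal_gen_sub]) blast

lemma ideal_mult_least:
  "is_ideal J \<Longrightarrow> (\<And>a b. a \<in> A \<Longrightarrow> b \<in> B \<Longrightarrow> a * b \<in> J) \<Longrightarrow> ideal_mult A B \<subseteq> J"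
  unfolding ideal_mult_def by (rule ideal_gen_least) auto

lemma ideal_power_ideal: "is_ideal (ideal_power I t)"
  by (cases t) (simp_all add: ideal_UNIV ideal_mult_ideal)

text \<open>In a maximal ideal \<open>m\<close>, every \<open>u \<notin> m\<close> is invertible modulo \<open>m\<close>, since \<open>m + (u)\<close> is
  an ideal strictly containing \<open>m\<close>.\<close>
lemma maximal_ideal_inverse_mod:
  assumes mx: "maximal_ideal m" and u: "u \<notin> m"
  obtains v where "1 - v * u \<in> m"
proof -
  have m: "is_ideal m" using mx by (simp add: maximal_ideal_def)
  define J where "J = {x + r * u | x r. x \<in> m}"
  have J: "is_ideal J"
    unfolding is_ideal_def J_def
  proof (intro conjI ballI allI impI)
    show "0 \<in> {x + r * u |x r. x \<in> m}"
      by (intro CollectI exI[of _ 0]) (simp add: ideal_zero[OF m])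
  next
    fix a b assume "a \<in> {x + r * u |x r. x \<in> m}" "b \<in> {x + r * u |x r. x \<in> m}"
    then obtain x1 r1 x2 r2 where "a = x1 + r1 * u" "x1 \<in> m" "b = x2 + r2 * u" "x2 \<in> m"
      by auto
    then show "a + b \<in> {x + r * u |x r. x \<in> m}"
      by (intro CollectI exI[of _ "x1 + x2"] exI[of _ "r1 + r2"])
         (auto simp: algebra_simps ideal_add[OF m])
  next
    fix s a assume "a \<in> {x + r * u |x r. x \<in> m}"
    then obtain x1 r1 where "a = x1 + r1 * u" "x1 \<in> m" by auto
    then show "s * a \<in> {x + r * u |x r. x \<in> m}"
      by (intro CollectI exI[of _ "s * x1"] exI[of _ "s * r1"])
         (auto simp: algebra_simps ideal_lmult[OF m])
  qed
  have "x = x + 0 * u" "u = 0 + 1 * u" for x by simp_all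
  then have "m \<subseteq> J" "u \<in> J" unfolding J_def using ideal_zero[OF m] by blast+
  then have "J = UNIV" using mx u J by (auto simp: maximal_ideal_def)
  then obtain x v where "x \<in> m" "1 = x + v * u" unfolding J_def by blast
  then have "1 - v * u = x" by (simp add: algebra_simps)
  then show ?thesis using \<open>x \<in> m\<close> by (intro that[of v]) simp
qed

lemma contract_ideal:
  assumes I: "is_ideal I"
  shows "is_ideal (contract I)"
  unfolding is_ideal_def contract_def
proof (intro conjI ballI allI impI; simp)
  show "0 \<in> I" by (rule ideal_zero[OF I])
next
  fix x y assume "[:x:] \<in> I" "[:y:] \<in> I"
  then show "[:x + y:] \<in> I" using ideal_add[OF I] by fastforce
next
  fix r x assume "[:x:] \<in> I"
  then show "[:r * x:] \<in> I" using ideal_lmult[OF I, of "[:x:]" "[:r:]"] by (simp add: mult.commute)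
qed

text \<open>The easy half of power stability, valid for every ideal: \<open>(I \<inter> R)^t \<subseteq> I^t \<inter> R\<close>.\<close>
lemma contract_power_supset:
  assumes I: "is_ideal I"
  shows "ideal_power (contract I) t \<subseteq> contract (ideal_power I t)"
proof (induction t)
  case 0
  then show ?case by (simp add: contract_def)
next
  case (Suc t)
  show ?case
    unfolding ideal_power.simps
  proof (rule ideal_mult_least[OF contract_ideal[OF ideal_mult_ideal]])
    fix a b assume "a \<in> contract I" "b \<in> ideal_power (contract I) t"
    then have "[:a:] * [:b:] \<in> ideal_mult I (ideal_power I t)"
      using Suc by (intro ideal_mult_mem) (auto simp: contract_def)
    then show "a * b \<in> contract (ideal_mult I (ideal_power I t))"
      by (simp add: contract_def mult.commute)
  qed
qed

section \<open>The extended ideal \<open>M[X]\<close>\<close>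

text \<open>Polynomials all of whose coefficients lie in \<open>M\<close>; for an ideal \<open>M\<close> of \<open>R\<close> this is the
  extension \<open>M R[X]\<close>.\<close>
definition poly_ext :: "'a::comm_ring_1 set \<Rightarrow> 'a poly set" where
  "poly_ext M = {p. \<forall>k. coeff p k \<in> M}"

lemma poly_ext_ideal:
  assumes M: "is_ideal M"
  shows "is_ideal (poly_ext M)"
  unfolding is_ideal_def poly_ext_def
  by (auto simp: M coeff_mult intro!: ideal_sum ideal_lmult[OF M] ideal_add[OF M] ideal_zero[OF M])

lemma poly_ext_UNIV: "poly_ext UNIV = UNIV"
  by (simp add: poly_ext_def)

lemma poly_ext_monom: "a \<in> M \<Longrightarrow> is_ideal M \<Longrightarrow> monom a n \<in> poly_ext M"
  by (simp add: poly_ext_def coeff_monom ideal_zero)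

lemma poly_ext_mult: "p \<in> poly_ext A \<Longrightarrow> q \<in> poly_ext B \<Longrightarrow> p * q \<in> poly_ext (ideal_mult A B)"
  unfolding poly_ext_def by (auto simp: coeff_mult intro!: ideal_sum ideal_mult_ideal ideal_mult_mem)

text \<open>\<open>(I \<inter> R)[X] \<subseteq> I\<close>: a polynomial is the sum of its monomials \<open>c X^k\<close> with \<open>c \<in> I\<close>.\<close>
lemma poly_ext_contract_subset:
  assumes I: "is_ideal I"
  shows "poly_ext (contract I) \<subseteq> I"
proof
  fix p assume "p \<in> poly_ext (contract I)"
  then show "p \<in> I"
  proof (induct p rule: pCons_induct)
    case 0
    then show ?case by (simp add: ideal_zero[OF I])
  next
    case (pCons a p)
    then have coeffs: "[:coeff (pCons a p) k:] \<in> I" for k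
      by (simp add: poly_ext_def contract_def)
    have "[:a:] \<in> I" using coeffs[of 0] by simp
    moreover have "p \<in> poly_ext (contract I)"
      using coeffs[of "Suc _"] by (simp add: poly_ext_def contract_def)
    then have "p \<in> I" by (rule pCons.hyps)
    ultimately have "[:a:] + [:0, 1:] * p \<in> I" by (intro ideal_add[OF I] ideal_lmult[OF I])
    then show ?case by simp
  qed
qed

text \<open>The leading
  coefficient of \<open>f q\<close> is that of \<open>q\<close>, so it lies in \<open>M\<close>; strip it off and induct on the degree.\<close>
lemma monic_cofactor_poly_ext:
  fixes f q :: "'a::comm_ring_1 poly"
  assumes M: "is_ideal M" and f: "lead_coeff f = 1" "degree f \<ge> 1"
    and fq: "\<forall>k\<ge>1. coeff (f * q) k \<in> M"
  shows "q \<in> poly_ext M"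
  using fq
proof (induction "degree q" arbitrary: q rule: less_induct)
  case less
  show ?case
  proof (cases "q = 0")
    case True
    then show ?thesis by (simp add: poly_ext_def ideal_zero[OF M])
  next
    case False
    define a n where "a = lead_coeff q" and "n = degree q"
    have "coeff (f * q) (degree f + n) = a"
      unfolding a_def n_def coeff_mult_degree_sum f by simp
    with less.prems f have aM: "a \<in> M" by (metis le_add1 order.trans)
    define q' where "q' = q - monom a n"
    have fm: "f * monom a n \<in> poly_ext M"
      using poly_ext_monom[OF aM M] poly_ext_ideal[OF M] by (simp add: ideal_lmult)
    have "\<forall>k\<ge>1. coeff (f * q') k \<in> M"
    proof (intro allI impI)
      fix k :: nat assume "k \<ge> 1"
      then have "coeff (f * q) k \<in> M" using less.prems by blast
      moreover have "coeff (f * monom a n) k \<in> M" using fm by (simp add: poly_ext_def)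
      ultimately show "coeff (f * q') k \<in> M"
        unfolding q'_def right_diff_distrib coeff_diff by (rule ideal_diff[OF M])
    qed
    moreover have "degree q' < degree q \<or> q' = 0"
    proof (rule disjCI)
      assume "q' \<noteq> 0"
      have "degree q' \<le> n" unfolding q'_def n_def
        by (rule degree_diff_le) (auto simp: degree_monom_le)
      moreover have "coeff q' n = 0" unfolding q'_def a_def n_def by simp
      ultimately show "degree q' < degree q"
        using \<open>q' \<noteq> 0\<close> unfolding n_def by (metis le_neq_implies_less leading_coeff_0_iff)
    qed
    ultimately have "q' \<in> poly_ext M"
      using less.hyps by (auto simp: poly_ext_def ideal_zero[OF M])
    then have "q' + monom a n \<in> poly_ext M"
      by (rule ideal_add[OF poly_ext_ideal[OF M] _ poly_ext_monom[OF aM M]])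
    then show ?thesis unfolding q'_def by simp
  qed
qed

section \<open>The ideal \<open>M[X] + (f)\<close>\<close>

definition ext_plus_principal :: "'a::comm_ring_1 set \<Rightarrow> 'a poly \<Rightarrow> 'a poly set" where
  "ext_plus_principal M f = {g + f * s | g s. g \<in> poly_ext M}"

lemma ext_plus_principal_ideal:
  assumes M: "is_ideal M"
  shows "is_ideal (ext_plus_principal M f)"
proof -
  note MX = poly_ext_ideal[OF M]
  let ?S = "{g + f * s | g s. g \<in> poly_ext M}"
  have "0 \<in> ?S"
    by (intro CollectI exI[of _ 0]) (simp add: ideal_zero[OF MX])
  moreover have "a + b \<in> ?S" if ab: "a \<in> ?S" "b \<in> ?S" for a b
  proof -
    obtain g1 s1 g2 s2
      where "a = g1 + f * s1" "g1 \<in> poly_ext M" "b = g2 + f * s2" "g2 \<in> poly_ext M"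
      using ab by blast
    then have "a + b = (g1 + g2) + f * (s1 + s2) \<and> g1 + g2 \<in> poly_ext M"
      by (auto simp: algebra_simps ideal_add[OF MX])
    then show ?thesis by blast
  qed
  moreover have "r * a \<in> ?S" if a: "a \<in> ?S" for r a
  proof -
    obtain g1 s1 where "a = g1 + f * s1" "g1 \<in> poly_ext M"
      using a by blast
    then have "r * a = r * g1 + f * (r * s1) \<and> r * g1 \<in> poly_ext M"
      by (auto simp: algebra_simps ideal_rmult[OF MX])
    then show ?thesis by blast
  qed
  ultimately show ?thesis
    unfolding is_ideal_def ext_plus_principal_def by blast
qed

text \<open>If \<open>I \<subseteq> M[X] + (f)\<close> then \<open>I^t \<subseteq> M^t[X] + (f)\<close>, because
  \<open>(g\<^sub>1 + f s\<^sub>1)(g\<^sub>2 + f s\<^sub>2) = g\<^sub>1 g\<^sub>2 + f (\<dots>)\<close>.\<close>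
lemma ideal_power_subset_ext_plus_principal:
  assumes I: "I \<subseteq> ext_plus_principal M f"
  shows "ideal_power I t \<subseteq> ext_plus_principal (ideal_power M t) f"
proof (induction t)
  case 0
  have "p = p + f * 0 \<and> p \<in> poly_ext UNIV" for p by (simp add: poly_ext_UNIV)
  then show ?case unfolding ideal_power.simps ext_plus_principal_def by blast
next
  case (Suc t)
  show ?case
    unfolding ideal_power.simps
  proof (rule ideal_mult_least[OF ext_plus_principal_ideal[OF ideal_mult_ideal]])
    fix i j assume "i \<in> I" "j \<in> ideal_power I t"
    then obtain g1 s1 g2 s2 where
      gs: "i = g1 + f * s1" "g1 \<in> poly_ext M" "j = g2 + f * s2" "g2 \<in> poly_ext (ideal_power M t)"
      using I Suc unfolding ext_plus_principal_def by blast
    have "i * j = g1 * g2 + f * (s1 * (g2 + f * s2) + g1 * s2)"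
      unfolding gs by (simp add: algebra_simps)
    moreover have "g1 * g2 \<in> poly_ext (ideal_mult M (ideal_power M t))"
      using poly_ext_mult[OF gs(2,4)] .
    ultimately show "i * j \<in> ext_plus_principal (ideal_mult M (ideal_power M t)) f"
      unfolding ext_plus_principal_def by blast
  qed
qed

lemma contract_ext_plus_principal:
  assumes M: "is_ideal M" and f: "lead_coeff f = 1" "degree f \<ge> 1"
  shows "contract (ext_plus_principal M f) \<subseteq> M"
proof
  fix c assume "c \<in> contract (ext_plus_principal M f)"
  then obtain g s where gs: "[:c:] = g + f * s" "g \<in> poly_ext M"
    by (auto simp: contract_def ext_plus_principal_def)
  have "\<forall>k\<ge>1. coeff (f * s) k \<in> M"
  proof (intro allI impI)
    fix k :: nat assume "k \<ge> 1"
    then obtain j where "k = Suc j" by (cases k) auto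
    then have "0 = coeff g k + coeff (f * s) k"
      using arg_cong[OF gs(1), of "\<lambda>p. coeff p k"] by simp
    then have "coeff (f * s) k = - coeff g k" by (simp add: eq_neg_iff_add_eq_0 add.commute)
    then show "coeff (f * s) k \<in> M" using gs(2) ideal_neg[OF M] by (simp add: poly_ext_def)
  qed
  then have "f * s \<in> poly_ext M"
    using monic_cofactor_poly_ext[OF M f] poly_ext_ideal[OF M] by (simp add: ideal_lmult)
  then have "[:c:] \<in> poly_ext M"
    unfolding gs(1) by (rule ideal_add[OF poly_ext_ideal[OF M] gs(2)])
  then show "c \<in> M" by (metis poly_ext_def coeff_pCons_0 mem_Collect_eq)
qed

section \<open>A monic generator modulo \<open>m[X]\<close>\<close>

lemma top_coeff_outside:
  assumes M: "is_ideal M" and p: "p \<notin> poly_ext M"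
  obtains d where "coeff p d \<notin> M" "\<forall>k>d. coeff p k \<in> M"
proof -
  define D where "D = {k. coeff p k \<notin> M}"
  have "D \<subseteq> {..degree p}"
  proof
    fix k assume "k \<in> D"
    then have "coeff p k \<noteq> 0" using ideal_zero[OF M] by (auto simp: D_def)
    then show "k \<in> {..degree p}" by (simp add: le_degree)
  qed
  then have "finite D" by (rule finite_subset) simp
  moreover have "D \<noteq> {}" using p by (auto simp: D_def poly_ext_def)
  ultimately show ?thesis
    using that[of "Max D"] Max_in[of D] Max_ge[of D] by (fastforce simp: D_def)
qed

lemma monic_congruent_multiple:
  fixes p :: "'a::comm_ring_1 poly"
  assumes mx: "maximal_ideal m" and top: "coeff p d \<notin> m" "\<forall>k>d. coeff p k \<in> m"
  obtains f v where "lead_coeff f = 1" "degree f = d" "f - smult v p \<in> poly_ext m"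
proof -
  have m: "is_ideal m" using mx by (simp add: maximal_ideal_def)
  obtain v where v: "1 - v * coeff p d \<in> m"
    using maximal_ideal_inverse_mod[OF mx top(1)] .
  define f where "f = monom 1 d + (\<Sum>k<d. monom (v * coeff p k) k)"
  have cf: "coeff f k = (if k < d then v * coeff p k else if k = d then 1 else 0)" for k
    unfolding f_def by (auto simp: coeff_sum coeff_monom)
  have degf: "degree f = d"
    by (rule antisym) (auto intro: degree_le le_degree simp: cf)
  have "coeff (f - smult v p) k \<in> m" for k
  proof -
    consider "k < d" | "k = d" | "k > d" by linarith
    then show ?thesis
    proof cases
      case 3
      then have "- (v * coeff p k) \<in> m" using top(2) by (simp add: ideal_lmult ideal_neg m)
      then show ?thesis using 3 by (simp add: cf)
    qed (use v in \<open>simp_all add: cf ideal_zero[OF m]\<close>)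
  qed
  then show ?thesis using that[of f v] by (simp add: degf cf poly_ext_def)
qed

lemma monic_division:
  fixes f q :: "'a::comm_ring_1 poly"
  assumes "lead_coeff f = 1"
  obtains s r where "q = f * s + r" "r = 0 \<or> degree r < degree f"
proof -
  have "f \<noteq> 0" using assms by auto
  obtain s r where "pseudo_divmod q f = (s, r)" by (cases "pseudo_divmod q f")
  from pseudo_divmod[OF \<open>f \<noteq> 0\<close> this] assms that show ?thesis by auto
qed

text \<open>A monic element of \<open>I\<close> whose degree does not exceed the top degree of any element
  of \<open>I\<close> outside \<open>m[X]\<close> generates \<open>I\<close> modulo \<open>m[X]\<close>, since remainders are too small.\<close>
lemma monic_minimal_generates:
  assumes I: "is_ideal I" and m: "m = contract I"
    and f: "f \<in> I" "lead_coeff f = 1"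
    and minimal: "\<And>p d. p \<in> I \<Longrightarrow> coeff p d \<notin> m \<Longrightarrow> \<forall>k>d. coeff p k \<in> m \<Longrightarrow> degree f \<le> d"
  shows "I \<subseteq> ext_plus_principal m f"
proof
  have mI: "is_ideal m" unfolding m by (rule contract_ideal[OF I])
  fix q assume q: "q \<in> I"
  obtain s r where sr: "q = f * s + r" "r = 0 \<or> degree r < degree f"
    using monic_division[OF f(2)] .
  have "q - f * s \<in> I" using q f(1) by (intro ideal_diff[OF I] ideal_rmult[OF I])
  moreover have "q - f * s = r" using sr(1) by simp
  ultimately have rI: "r \<in> I" by simp
  have "r \<in> poly_ext m"
  proof (rule ccontr)
    assume "r \<notin> poly_ext m"
    then obtain d where d: "coeff r d \<notin> m" "\<forall>k>d. coeff r k \<in> m"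
      using top_coeff_outside[OF mI] by blast
    have "coeff r d \<noteq> 0" using d(1) ideal_zero[OF mI] by auto
    then have "r \<noteq> 0" "d \<le> degree r" by (auto intro: le_degree)
    moreover have "degree f \<le> d" by (rule minimal[OF rI d])
    ultimately show False using sr(2) by simp
  qed
  moreover have "q = r + f * s" using sr(1) by (simp add: add.commute)
  ultimately show "q \<in> ext_plus_principal m f"
    unfolding ext_plus_principal_def by blast
qed

lemma maximal_contraction_monic_generator:
  assumes I: "is_ideal I" and mx: "maximal_ideal (contract I)"
  obtains f where "lead_coeff f = 1" "degree f \<ge> 1" "I \<subseteq> ext_plus_principal (contract I) f"
proof (cases "I \<subseteq> poly_ext (contract I)")
  case True
  have "I \<subseteq> ext_plus_principal (contract I) [:0, 1:]"
    using True by (force simp: ext_plus_principal_def)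
  then show ?thesis by (rule that[of "[:0, 1:]", rotated 2]) simp_all
next
  case False
  define m where "m = contract I"
  have mI: "is_ideal m" using mx by (simp add: maximal_ideal_def m_def)
  define P where "P d \<longleftrightarrow> (\<exists>p\<in>I. coeff p d \<notin> m \<and> (\<forall>k>d. coeff p k \<in> m))" for d
  have "\<exists>d. P d"
    using False top_coeff_outside[OF mI] unfolding P_def m_def by blast
  then have "P (LEAST d. P d)" by (rule LeastI_ex)
  then obtain p where p: "p \<in> I" "coeff p (LEAST d. P d) \<notin> m" "\<forall>k>(LEAST d. P d). coeff p k \<in> m"
    unfolding P_def by blast
  obtain f v where f: "lead_coeff f = 1" "degree f = (LEAST d. P d)" "f - smult v p \<in> poly_ext m"
    using monic_congruent_multiple[OF mx[folded m_def] p(2,3)] .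
  have "f - smult v p \<in> I" using f(3) poly_ext_contract_subset[OF I] by (auto simp: m_def)
  moreover have "smult v p \<in> I" using ideal_lmult[OF I p(1), of "[:v:]"] by simp
  ultimately have fI: "f \<in> I" using ideal_add[OF I] by fastforce
  have "degree f \<ge> 1"
  proof (rule ccontr)
    assume "\<not> degree f \<ge> 1"
    then have "degree f = 0" by simp
    then have "[:1:] = f" using f(1) degree_0_id[of f] by simp
    then have "1 \<in> m" using fI by (simp add: m_def contract_def)
    then have "m = UNIV" by (rule ideal_one_imp_UNIV[OF mI])
    then show False using mx by (simp add: maximal_ideal_def m_def)
  qed
  moreover have "I \<subseteq> ext_plus_principal m f"
    by (rule monic_minimal_generates[OF I m_def fI f(1)])
       (auto simp: f(2) P_def intro: Least_le)
  ultimately show ?thesis using that f(1) by (simp add: m_def)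
qed

theorem corollary3p6:
  fixes I :: "'a::idom poly set"
  assumes "is_ideal I"
    and "maximal_ideal (contract I)"
  shows "power_stable I"
  unfolding power_stable_def
proof (intro allI impI)
  fix t :: nat
  let ?m = "contract I"
  obtain f where f: "lead_coeff f = 1" "degree f \<ge> 1" and gen: "I \<subseteq> ext_plus_principal ?m f"
    using maximal_contraction_monic_generator[OF assms] .
  have "contract (ideal_power I t) \<subseteq> contract (ext_plus_principal (ideal_power ?m t) f)"
    using ideal_power_subset_ext_plus_principal[OF gen] by (auto simp: contract_def)
  also have "\<dots> \<subseteq> ideal_power ?m t"
    by (rule contract_ext_plus_principal[OF ideal_power_ideal f])
  finally show "contract (ideal_power I t) = ideal_power ?m t"
    using contract_power_supset[OF assms(1)] by blast
qed

end
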